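(* Let $N$ be a positive integer and let $\lambda=(\lambda_1,\dots,\lambda_t)\in\overline{\mathcal{U}}_N$ with $\lambda_t$ odd. Then for every integer $x$ with $1\le x\le\lambda_t$, $$x\in\lambda\iff \lambda_t-x\notin\lambda.$$
   Context: A partition of $N$ into distinct parts is a sequence $\lambda=(\lambda_1<\dots<\lambda_t)$ of positive integers with sum $N$ and $t\ge 2$, identified with its set of parts. Missing parts: $\mathcal{M}_\lambda=\{1,\dots,\lambda_t\}\setminus\lambda$. $\lambda$ is refinable if there are two distinct missing parts $\mu<\mu'$ with $\mu+\mu'\in\lambda$, unrefinable otherwise; $\mathcal{U}_N$ is the set of unrefinable partitions of $N$. An element of $\mathcal{U}_N$ is maximal if its largest part is the maximum of the largest parts of elements of $\mathcal{U}_N$; $\widetilde{\mathcal{U}}_N$ is the set of these and $\overline{\mathcal{U}}_N=\{\lambda\in\widetilde{\mathcal{U}}_N:\#\mathcal{M}_\lambda=\lfloor\lambda_t/2\rfloor\}$. *)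

theory Defs
  imports Main
begin

text \<open>A partition of N into distinct parts, identified with its (finite) set of parts.\<close>
definition distinct_partition :: "nat \<Rightarrow> nat set \<Rightarrow> bool" where
  "distinct_partition N L \<longleftrightarrow> finite L \<and> 0 \<notin> L \<and> \<Sum>L = N \<and> card L \<ge> 2"

definition missing_parts :: "nat set \<Rightarrow> nat set" where
  "missing_parts L = {1..Max L} - L"

definition refinable :: "nat set \<Rightarrow> bool" where
  "refinable L \<longleftrightarrow> (\<exists>\<mu> \<mu>'. \<mu> \<in> missing_parts L \<and> \<mu>' \<in> missing_parts L \<and> \<mu> < \<mu>' \<and> \<mu> + \<mu>' \<in> L)"

definition unrefinable_set :: "nat \<Rightarrow> nat set set" where
  "unrefinable_set N = {L. distinct_partition N L \<and> \<not> refinable L}"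

definition maximal_unrefinable :: "nat \<Rightarrow> nat set set" where
  "maximal_unrefinable N = {L \<in> unrefinable_set N. \<forall>L' \<in> unrefinable_set N. Max L' \<le> Max L}"

definition overline_U :: "nat \<Rightarrow> nat set set" where
  "overline_U N = {L \<in> maximal_unrefinable N. card (missing_parts L) = Max L div 2}"

end

theory Submission
  imports Defs
begin

text \<open>Since \<open>\<lambda>\<^sub>t\<close> is a part, unrefinability forbids two missing parts summing to \<open>\<lambda>\<^sub>t\<close>.
  As \<open>\<lambda>\<^sub>t\<close> is odd, the numbers \<open>1, \<dots>, \<lambda>\<^sub>t - 1\<close> split into \<open>\<lfloor>\<lambda>\<^sub>t/2\<rfloor>\<close> pairs \<open>{y, \<lambda>\<^sub>t - y}\<close>,
  so the missing parts contain at most one number of each pair; having exactly \<open>\<lfloor>\<lambda>\<^sub>t/2\<rfloor>\<close>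
  elements, they contain exactly one of each pair.\<close>

lemma overline_UD:
  assumes "L \<in> overline_U N"
  shows "finite L" "L \<noteq> {}" "0 \<notin> L" "\<not> refinable L"
    "card (missing_parts L) = Max L div 2"
proof -
  have "finite L \<and> card L \<ge> 2 \<and> 0 \<notin> L \<and> \<not> refinable L \<and> card (missing_parts L) = Max L div 2"
    using assms by (simp add: overline_U_def maximal_unrefinable_def unrefinable_set_def
        distinct_partition_def)
  then show "finite L" "L \<noteq> {}" "0 \<notin> L" "\<not> refinable L"
    "card (missing_parts L) = Max L div 2"
    by auto
qed

lemma unrefinable_missing_sum_notin:
  assumes "\<not> refinable L" "a \<in> missing_parts L" "b \<in> missing_parts L" "a \<noteq> b"
  shows "a + b \<notin> L"
  using assms by (cases a b rule: linorder_cases) (auto simp: refinable_def add.commute)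

lemma missing_parts_subset:
  assumes "finite L" "L \<noteq> {}"
  shows "missing_parts L \<subseteq> {1..<Max L}"
  using Max_in[OF assms] by (auto simp: missing_parts_def le_less)

lemma unrefinable_missing_reflection_notin:
  assumes "\<not> refinable L" "finite L" "L \<noteq> {}" "odd (Max L)" "a \<in> missing_parts L"
  shows "Max L - a \<notin> missing_parts L"
proof
  assume "Max L - a \<in> missing_parts L"
  moreover have "a < Max L" using assms(2,3,5) missing_parts_subset by fastforce
  moreover have "a \<noteq> Max L - a" using assms(4) \<open>a < Max L\<close> by presburger
  ultimately have "a + (Max L - a) \<notin> L"
    using unrefinable_missing_sum_notin[OF assms(1,5)] by blast
  with \<open>a < Max L\<close> Max_in[OF assms(2,3)] show False by simp
qed

lemma min_reflection_eqD:
  fixes a b m :: nat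
  assumes "a \<le> m" "b \<le> m" "min a (m - a) = min b (m - b)"
  shows "a = b \<or> a = m - b"
  using assms unfolding min_def by (auto split: if_splits)

lemma inj_on_min_reflection:
  fixes m :: nat
  assumes "M \<subseteq> {..m}" "\<And>a. a \<in> M \<Longrightarrow> m - a \<notin> M"
  shows "inj_on (\<lambda>y. min y (m - y)) M"
proof (rule inj_onI)
  fix a b assume a: "a \<in> M" and b: "b \<in> M" and eq: "min a (m - a) = min b (m - b)"
  have "a \<le> m" "b \<le> m" using a b assms(1) by auto
  then have "a = b \<or> a = m - b" using eq by (rule min_reflection_eqD)
  then show "a = b" using assms(2) a b by blast
qed

text \<open>Pigeonhole: \<open>y \<mapsto> min y (m - y)\<close> injects \<open>M\<close> into \<open>{1..m div 2}\<close>, a set of the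
  same size, so every pair \<open>{y, m - y}\<close> is hit.\<close>

lemma one_of_each_reflection_pair:
  assumes "odd m" "M \<subseteq> {1..<m}" "\<And>a. a \<in> M \<Longrightarrow> m - a \<notin> M" "card M = m div 2"
    and "1 \<le> y" "y < m"
  shows "y \<in> M \<longleftrightarrow> m - y \<notin> M"
proof -
  obtain k where m: "m = 2 * k + 1" using assms(1) by (rule oddE)
  define f where "f y = min y (m - y)" for y
  have inj: "inj_on f M"
    unfolding f_def using assms(2,3) by (intro inj_on_min_reflection) auto
  have sub: "f ` M \<subseteq> {1..m div 2}"
    using assms(2) by (force simp: f_def m)
  have onto: "f ` M = {1..m div 2}"
    using card_subset_eq[OF _ sub] card_image[OF inj] assms(4) by simp
  have "f y \<in> {1..m div 2}"
    using assms(5,6) by (auto simp: f_def m min_def)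
  then obtain a where "a \<in> M" "f a = f y"
    unfolding onto[symmetric] by auto
  moreover have "a \<le> m" using \<open>a \<in> M\<close> assms(2) by auto
  ultimately have "a = y \<or> a = m - y"
    using assms(6) min_reflection_eqD[of a m y] by (simp add: f_def)
  then have "y \<in> M \<or> m - y \<in> M" using \<open>a \<in> M\<close> by blast
  then show ?thesis using assms(3,6) by force
qed

theorem lemma4p1:
  fixes N :: nat and L :: "nat set" and x :: nat
  assumes "N > 0" and "L \<in> overline_U N" and "odd (Max L)"
    and "1 \<le> x" and "x \<le> Max L"
  shows "x \<in> L \<longleftrightarrow> Max L - x \<notin> L"
proof (cases "x = Max L")
  case True
  with overline_UD[OF assms(2)] show ?thesis by simp
next
  case False
  note L = overline_UD[OF assms(2)]
  have "x \<in> missing_parts L \<longleftrightarrow> Max L - x \<notin> missing_parts L"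
  proof (rule one_of_each_reflection_pair)
    show "missing_parts L \<subseteq> {1..<Max L}" using missing_parts_subset[OF L(1,2)] .
    show "\<And>a. a \<in> missing_parts L \<Longrightarrow> Max L - a \<notin> missing_parts L"
      using unrefinable_missing_reflection_notin[OF L(4,1,2) assms(3)] .
  qed (use L(5) assms(3-5) False in auto)
  moreover have "x \<in> missing_parts L \<longleftrightarrow> x \<notin> L" "Max L - x \<in> missing_parts L \<longleftrightarrow> Max L - x \<notin> L"
    using assms(4,5) False by (auto simp: missing_parts_def)
  ultimately show ?thesis by blast
qed

end
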